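(* Assume $\phi$ is $\alpha$-Lipschitz for some $0<\alpha<\infty$, $h$ is locally integrable and locally bounded, and $\alpha\int_0^T|h(t)|dt<1$. Then for every $\delta>0$, $$\limsup_{M\to\infty}\limsup_{\epsilon\to0}\epsilon\log\mathbb{P}\Big(\sup_{0\le s\le t\le T,\ |t-s|\le 1/M}|Z^\epsilon_t-Z^\epsilon_s|\ge\delta\Big)=-\infty.$$
   Context: Let $\phi:\mathbb{R}\to[0,\infty)$ and $h:[0,\infty)\to\mathbb{R}$, $T>0$ fixed. For $\epsilon>0$, let $N^\epsilon$ be the simple point process on $[0,\infty)$ with empty past, $N^\epsilon_t$ the number of points in $(0,t]$, defined as the unique strong solution of $N^\epsilon_t=\int_0^t\int_0^\infty \mathbf{1}\{z\le \frac1\epsilon\phi(\int_0^{s-}\epsilon h(s-u)dN^\epsilon_u)\}\pi(dz\,ds)$, where $\pi$ is a Poisson random measure on $[0,\infty)^2$ with intensity $dz\,ds$. Set $Z^\epsilon_t:=\epsilon N^\epsilon_t$. *)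

theory Defs
  imports "HOL-Probability.Probability"
begin

definition elog :: "real \<Rightarrow> ereal" where
  "elog p = (if 0 < p then ereal (ln p) else -\<infinity>)"

text \<open>Poisson random measure on [0,inf)^2 with intensity dz ds (Lebesgue measure),
  represented by its random set of atoms (simple point process).\<close>
definition poisson_random_measure :: "'w measure \<Rightarrow> ('w \<Rightarrow> (real \<times> real) set) \<Rightarrow> bool" where
  "poisson_random_measure M Pts \<longleftrightarrow>
     prob_space M \<and>
     (\<forall>\<omega>\<in>space M. Pts \<omega> \<subseteq> {0..} \<times> {0..}) \<and>
     (\<forall>A. A \<in> sets lborel \<and> A \<subseteq> {0..} \<times> {0..} \<and> emeasure lborel A < \<infinity> \<longrightarrow>
         (AE \<omega> in M. finite (Pts \<omega> \<inter> A)) \<and>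
         (\<forall>k::nat. {\<omega>\<in>space M. card (Pts \<omega> \<inter> A) = k} \<in> sets M \<and>
            measure M {\<omega>\<in>space M. card (Pts \<omega> \<inter> A) = k}
              = exp (- measure lborel A) * measure lborel A ^ k / fact k)) \<and>
     (\<forall>(I::nat set) A. finite I \<and> disjoint_family_on A I \<and>
         (\<forall>i\<in>I. A i \<in> sets lborel \<and> A i \<subseteq> {0..} \<times> {0..} \<and> emeasure lborel (A i) < \<infinity>) \<longrightarrow>
         prob_space.indep_vars M (\<lambda>_. count_space UNIV) (\<lambda>i \<omega>. card (Pts \<omega> \<inter> A i)) I)"

text \<open>N (a path-valued random variable, N \<omega> t = number of points in (0,t]) solves the
  thinning equation N_t = \<integral>_0^t \<integral>_0^\<infinity> 1{z \<le> (1/\<epsilon>) \<phi>(\<integral>_0^{s-} \<epsilon> h(s-u) dN_u)} \<pi>(dz ds),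
  almost surely, for all t (for t \<le> 0 this forces N_t = 0: empty past).
  The integral against dN is the Lebesgue-Stieltjes integral over (0,s).\<close>
definition hawkes_solution ::
  "'w measure \<Rightarrow> ('w \<Rightarrow> (real \<times> real) set) \<Rightarrow> (real \<Rightarrow> real) \<Rightarrow> (real \<Rightarrow> real) \<Rightarrow> real
     \<Rightarrow> ('w \<Rightarrow> real \<Rightarrow> nat) \<Rightarrow> bool" where
  "hawkes_solution M Pts \<phi> h \<epsilon> N \<longleftrightarrow>
     (AE \<omega> in M. \<forall>t::real. N \<omega> t =
        card {(z, s). (z, s) \<in> Pts \<omega> \<and> 0 < s \<and> s \<le> t \<and>
          z \<le> (1 / \<epsilon>) * \<phi> (LINT u:{0<..<s}|interval_measure (\<lambda>v. real (N \<omega> v)). \<epsilon> * h (s - u))})"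

end

theory Submission
  imports Defs
begin

text \<open>Cut [0,T] into n intervals of length T/n and fix a bound H for |h| on [0,T].
  While \<epsilon>N stays below c, the Lipschitz bound on \<phi> keeps the intensity below (\<phi> 0 + \<alpha>Hc)/\<epsilon>.
  Hence, if the j-th interval carries fewer than 2^j/\<epsilon> Poisson points under the level
  (\<phi> 0 + \<alpha>H(2^(j+1) - 1))/\<epsilon>, induction gives \<epsilon>N \<le> 2^j - 1 at its end; so \<epsilon>N \<le> 2^n - 1 on [0,T],
  and every increment of \<epsilon>N over a window of length 1/m is at most \<epsilon> times the number of
  points in a strip of area of order 2^n/(m\<epsilon>). A Poisson count on a region of area a/\<epsilon>
  reaches x/\<epsilon> with probability at most exp (-\<rho>x/\<epsilon>) once e a \<le> e^-\<rho> x, and \<rho> can be made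
  arbitrarily large by choosing first n and then m large.\<close>

section \<open>Poisson tail bounds on strips\<close>

abbreviation strip :: "real \<Rightarrow> real \<Rightarrow> real \<Rightarrow> (real \<times> real) set" where
  "strip L a b \<equiv> {0..L} \<times> {a<..b}"

lemma one_minus_exp_mult_sum_le:
  fixes \<mu> :: real assumes "0 \<le> \<mu>"
  shows "1 - exp (- \<mu>) * (\<Sum>j<k. \<mu> ^ j / fact j) \<le> \<mu> ^ k / fact k"
proof -
  obtain t where t: "\<bar>t\<bar> \<le> \<bar>\<mu>\<bar>" "exp \<mu> = (\<Sum>j<k. \<mu> ^ j / fact j) + (exp t / fact k) * \<mu> ^ k"
    using Maclaurin_exp_le by blast
  have "exp t \<le> exp \<mu>" using t(1) assms by simp
  have "1 - exp (- \<mu>) * (\<Sum>j<k. \<mu> ^ j / fact j) = exp (- \<mu>) * (exp \<mu> - (\<Sum>j<k. \<mu> ^ j / fact j))"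
    by (simp add: exp_minus field_simps)
  also have "\<dots> = exp (- \<mu>) * ((exp t / fact k) * \<mu> ^ k)" using t(2) by simp
  also have "\<dots> \<le> exp (- \<mu>) * ((exp \<mu> / fact k) * \<mu> ^ k)"
    using \<open>exp t \<le> exp \<mu>\<close> assms by (intro mult_left_mono mult_right_mono divide_right_mono) auto
  also have "\<dots> = \<mu> ^ k / fact k" by (simp add: exp_minus field_simps)
  finally show ?thesis .
qed

lemma power_div_fact_le_exp:
  fixes x :: real assumes "0 \<le> x"
  shows "x ^ k / fact k \<le> exp x"
proof -
  obtain t where "exp x = (\<Sum>j<Suc k. x ^ j / fact j) + (exp t / fact (Suc k)) * x ^ Suc k"
    using Maclaurin_exp_le by blast
  moreover have "x ^ k / fact k \<le> (\<Sum>j<Suc k. x ^ j / fact j)"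
    using assms by (intro member_le_sum) auto
  ultimately show ?thesis using assms by simp
qed

lemma power_div_fact_le_exp_neg:
  fixes \<mu> \<rho> :: real
  assumes "0 \<le> \<mu>" "0 \<le> \<rho>" and small: "exp 1 * \<mu> \<le> exp (- \<rho>) * real k"
  shows "\<mu> ^ k / fact k \<le> exp (- \<rho> * real k)"
proof -
  have "\<mu> \<le> exp (- \<rho> - 1) * real k" using small by (simp add: exp_diff field_simps exp_minus)
  then have "\<mu> ^ k / fact k \<le> (exp (- \<rho> - 1) * real k) ^ k / fact k"
    using assms by (intro divide_right_mono power_mono) auto
  also have "\<dots> = exp (- \<rho> - 1) ^ k * (real k ^ k / fact k)" by (simp add: power_mult_distrib)
  also have "\<dots> \<le> exp (- \<rho> - 1) ^ k * exp (real k)"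
    by (intro mult_left_mono power_div_fact_le_exp) auto
  also have "\<dots> = exp (- \<rho> * real k)"
    by (simp add: exp_of_nat_mult[symmetric] exp_add[symmetric] algebra_simps)
  finally show ?thesis .
qed

lemma poisson_random_measure_card_ge:
  assumes PRM: "poisson_random_measure M Pts"
    and A: "A \<in> sets lborel" "A \<subseteq> {0..} \<times> {0..}" "emeasure lborel A < \<infinity>"
  shows "{\<omega>\<in>space M. k \<le> card (Pts \<omega> \<inter> A)} \<in> sets M"
    and "measure M {\<omega>\<in>space M. k \<le> card (Pts \<omega> \<inter> A)} \<le> measure lborel A ^ k / fact k"
proof -
  interpret prob_space M using PRM unfolding poisson_random_measure_def by blast
  let ?\<mu> = "measure lborel A"
  define E where "E j = {\<omega>\<in>space M. card (Pts \<omega> \<inter> A) = j}" for j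
  have E: "E j \<in> events" "prob (E j) = exp (- ?\<mu>) * ?\<mu> ^ j / fact j" for j
    using PRM A unfolding poisson_random_measure_def E_def by blast+
  have ge_eq: "{\<omega>\<in>space M. k \<le> card (Pts \<omega> \<inter> A)} = space M - (\<Union>j<k. E j)"
    unfolding E_def by auto
  show "{\<omega>\<in>space M. k \<le> card (Pts \<omega> \<inter> A)} \<in> events" unfolding ge_eq using E by auto
  have "prob (\<Union>j<k. E j) = (\<Sum>j<k. prob (E j))"
    using E by (intro finite_measure_finite_Union) (auto simp: disjoint_family_on_def E_def)
  also have "\<dots> = exp (- ?\<mu>) * (\<Sum>j<k. ?\<mu> ^ j / fact j)"
    by (simp add: E sum_distrib_left)
  finally have "prob (space M - (\<Union>j<k. E j)) = 1 - exp (- ?\<mu>) * (\<Sum>j<k. ?\<mu> ^ j / fact j)"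
    using E by (subst prob_compl) auto
  also have "\<dots> \<le> ?\<mu> ^ k / fact k" by (rule one_minus_exp_mult_sum_le) simp
  finally show "prob {\<omega>\<in>space M. k \<le> card (Pts \<omega> \<inter> A)} \<le> ?\<mu> ^ k / fact k"
    unfolding ge_eq .
qed

lemma strip_sets_lborel: "strip L a b \<in> sets (lborel :: (real \<times> real) measure)"
proof -
  have "strip L a b \<in> sets (lborel \<Otimes>\<^sub>M (lborel :: real measure))"
    by (rule pair_measureI) auto
  then show ?thesis unfolding lborel_prod .
qed

lemma emeasure_lborel_strip:
  assumes "0 \<le> L" "a \<le> b"
  shows "emeasure (lborel :: (real \<times> real) measure) (strip L a b) = ennreal (L * (b - a))"
proof -
  have "emeasure (lborel :: (real \<times> real) measure) (strip L a b)
      = emeasure lborel {0..L} * emeasure lborel {a<..b}"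
    unfolding lborel_prod[symmetric] by (rule lborel.emeasure_pair_measure_Times) auto
  then show ?thesis using assms by (simp add: ennreal_mult)
qed

lemma poisson_random_measure_strip_finite:
  assumes PRM: "poisson_random_measure M Pts" and "0 \<le> L" "0 \<le> a" "a \<le> b"
  shows "AE \<omega> in M. finite (Pts \<omega> \<inter> strip L a b)"
proof -
  have "strip L a b \<in> sets lborel" "strip L a b \<subseteq> {0..} \<times> {0..}"
    "emeasure lborel (strip L a b) < \<infinity>"
    using assms strip_sets_lborel by (auto simp: emeasure_lborel_strip)
  then show ?thesis using PRM unfolding poisson_random_measure_def by blast
qed

lemma poisson_random_measure_strip_card_ge:
  assumes PRM: "poisson_random_measure M Pts" and "0 \<le> L" "0 \<le> a" "a \<le> b" "0 \<le> \<rho>"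
    and small: "exp 1 * (L * (b - a)) \<le> exp (- \<rho>) * x"
  shows "{\<omega>\<in>space M. x \<le> real (card (Pts \<omega> \<inter> strip L a b))} \<in> sets M"
    and "measure M {\<omega>\<in>space M. x \<le> real (card (Pts \<omega> \<inter> strip L a b))} \<le> exp (- \<rho> * x)"
proof -
  let ?R = "strip L a b"
  define k where "k = nat \<lceil>x\<rceil>"
  have x_le_k: "x \<le> real k" unfolding k_def by linarith
  have ev: "{\<omega>\<in>space M. x \<le> real (card (Pts \<omega> \<inter> ?R))} = {\<omega>\<in>space M. k \<le> card (Pts \<omega> \<inter> ?R)}"
    unfolding k_def by (auto simp: nat_le_iff ceiling_le_iff)
  have emR: "emeasure lborel ?R = ennreal (L * (b - a))"
    using assms by (intro emeasure_lborel_strip) auto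
  have R: "?R \<in> sets lborel" "?R \<subseteq> {0..} \<times> {0..}" "emeasure lborel ?R < \<infinity>"
    using assms strip_sets_lborel by (auto simp: emR)
  show "{\<omega>\<in>space M. x \<le> real (card (Pts \<omega> \<inter> ?R))} \<in> sets M"
    unfolding ev by (rule poisson_random_measure_card_ge(1)[OF PRM R])
  have "measure M {\<omega>\<in>space M. k \<le> card (Pts \<omega> \<inter> ?R)} \<le> measure lborel ?R ^ k / fact k"
    by (rule poisson_random_measure_card_ge(2)[OF PRM R])
  also have "\<dots> \<le> exp (- \<rho> * real k)"
  proof (rule power_div_fact_le_exp_neg)
    show "exp 1 * measure lborel ?R \<le> exp (- \<rho>) * real k"
      using small x_le_k assms emR
      by (simp add: measure_def) (meson exp_ge_zero mult_left_mono order_trans)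
  qed (use assms in auto)
  also have "\<dots> \<le> exp (- \<rho> * x)" using x_le_k assms by (simp add: mult_left_mono)
  finally show "measure M {\<omega>\<in>space M. x \<le> real (card (Pts \<omega> \<inter> ?R))} \<le> exp (- \<rho> * x)"
    unfolding ev .
qed

section \<open>Paths of the thinning equation\<close>

text \<open>For a non-monotone F no measure has the prescribed interval lengths, and
  interval_measure F degenerates to the null measure.\<close>
lemma emeasure_interval_measure_not_mono:
  fixes F :: "real \<Rightarrow> real"
  assumes "c \<le> a" "a \<le> b" "F c \<le> F b" "F b < F a"
  shows "emeasure (interval_measure F) X = 0"
proof -
  let ?I = "{(a, b). a \<le> (b::real)}" and ?G = "\<lambda>(a, b). {a<..b::real}"
    and ?len = "\<lambda>(a, b). ennreal (F b - F a)"
  have "\<not> (\<exists>\<mu>. (\<forall>i\<in>?I. \<mu> (?G i) = ?len i) \<and> measure_space UNIV (sigma_sets UNIV (?G`?I)) \<mu>)"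
  proof
    assume "\<exists>\<mu>. (\<forall>i\<in>?I. \<mu> (?G i) = ?len i) \<and> measure_space UNIV (sigma_sets UNIV (?G`?I)) \<mu>"
    then obtain \<mu> where len: "\<forall>i\<in>?I. \<mu> (?G i) = ?len i"
      and ms: "measure_space UNIV (sigma_sets UNIV (?G`?I)) \<mu>" by blast
    interpret sigma_algebra UNIV "sigma_sets UNIV (?G`?I)"
      using ms unfolding measure_space_def by blast
    have add: "additive (sigma_sets UNIV (?G`?I)) \<mu>"
      using ms unfolding measure_space_def by (intro countably_additive_additive) auto
    have ca: "{c<..a} \<in> sigma_sets UNIV (?G`?I)"
      using assms by (intro sigma_sets.Basic) (auto intro!: image_eqI[of _ _ "(c, a)"])
    have ab: "{a<..b} \<in> sigma_sets UNIV (?G`?I)"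
      using assms by (intro sigma_sets.Basic) (auto intro!: image_eqI[of _ _ "(a, b)"])
    have "{c<..b} = {c<..a} \<union> {a<..b}" using assms by auto
    then have "\<mu> {c<..b} = \<mu> {c<..a} + \<mu> {a<..b}"
      using additiveD[OF add _ ca ab] by auto
    then have "ennreal (F b - F c) = ennreal (F a - F c)"
      using len assms by (simp add: ennreal_neg)
    then show False using assms by (subst (asm) ennreal_inj) auto
  qed
  then have "interval_measure F = measure_of UNIV (?G`?I) (\<lambda>_. 0)"
    unfolding interval_measure_def extend_measure_def by auto
  then show ?thesis by (simp add: emeasure_measure_of_conv)
qed

lemma set_integral_abs_le:
  fixes f :: "'a \<Rightarrow> real"
  assumes A: "A \<in> sets M" "emeasure M A < \<infinity>" and bound: "\<And>x. x \<in> A \<Longrightarrow> \<bar>f x\<bar> \<le> B"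
  shows "\<bar>LINT x:A|M. f x\<bar> \<le> B * measure M A"
proof (cases "set_integrable M A f")
  case True
  have "\<bar>LINT x:A|M. f x\<bar> \<le> (LINT x|M. indicator A x * \<bar>f x\<bar>)"
    using set_integral_norm_bound[OF True] by (simp add: set_lebesgue_integral_def)
  also have "\<dots> \<le> (LINT x|M. indicator A x * B)"
  proof (rule integral_mono)
    show "integrable M (\<lambda>x. indicator A x * \<bar>f x\<bar>)"
      using integrable_abs[OF True[unfolded set_integrable_def]] by (simp add: abs_mult)
    show "integrable M (\<lambda>x. indicator A x * B)"
      using A by (intro integrable_mult_left) (auto simp: integrable_indicator_iff)
  qed (use bound in \<open>auto simp: indicator_def\<close>)
  also have "\<dots> = B * measure M A"
    using A by (simp add: mult.commute)
  finally show ?thesis .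
next
  case False
  then have "(LINT x:A|M. f x) = 0"
    by (simp add: set_lebesgue_integral_def set_integrable_def not_integrable_integral_eq)
  moreover have "0 \<le> B * measure M A" if "x \<in> A" for x
    using bound[OF that] by (meson abs_ge_zero order_trans measure_nonneg mult_nonneg_nonneg)
  ultimately show ?thesis by (cases "A = {}") auto
qed

lemma emeasure_interval_measure_Ioo_le:
  fixes F :: "real \<Rightarrow> real"
  assumes mono: "\<And>x y. x \<le> y \<Longrightarrow> F x \<le> F y" and right_cont: "\<And>a. continuous (at_right a) F"
    and "0 \<le> F 0" "0 < s" and bound: "\<And>v. v < s \<Longrightarrow> F v \<le> c"
  shows "emeasure (interval_measure F) {0<..<s} \<le> ennreal c"
proof -
  define A where "A n = {0<..s - s / real (Suc n)}" for n
  have incA: "incseq A" unfolding A_def incseq_def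
  proof (intro allI impI subsetI)
    fix m n x assume "m \<le> n" "x \<in> {0<..s - s / real (Suc m)}"
    moreover have "s / real (Suc n) \<le> s / real (Suc m)"
      using \<open>m \<le> n\<close> \<open>0 < s\<close> by (intro divide_left_mono) auto
    ultimately show "x \<in> {0<..s - s / real (Suc n)}" by auto
  qed
  have UA: "(\<Union>n. A n) = {0<..<s}"
  proof
    show "(\<Union>n. A n) \<subseteq> {0<..<s}"
    proof
      fix x assume "x \<in> (\<Union>n. A n)"
      then obtain n where "0 < x" "x \<le> s - s / real (Suc n)" unfolding A_def by auto
      moreover have "0 < s / real (Suc n)" using \<open>0 < s\<close> by simp
      ultimately show "x \<in> {0<..<s}" by simp
    qed
    show "{0<..<s} \<subseteq> (\<Union>n. A n)"
    proof
      fix x assume x: "x \<in> {0<..<s}"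
      obtain n :: nat where "s / (s - x) < real n" using reals_Archimedean2 by blast
      then have "s < real n * (s - x)" using x by (simp add: field_simps)
      then have "s / real (Suc n) \<le> s - x" using x \<open>0 < s\<close> by (simp add: field_simps)
      then have "x \<in> A n" using x unfolding A_def by auto
      then show "x \<in> (\<Union>n. A n)" by blast
    qed
  qed
  have "emeasure (interval_measure F) {0<..<s} = (SUP n. emeasure (interval_measure F) (A n))"
    unfolding UA[symmetric] by (rule SUP_emeasure_incseq[symmetric, OF _ incA]) (auto simp: A_def)
  also have "\<dots> \<le> ennreal c"
  proof (rule SUP_least)
    fix n
    show "emeasure (interval_measure F) (A n) \<le> ennreal c"
    proof (cases "0 \<le> s - s / real (Suc n)")
      case True
      then have "emeasure (interval_measure F) (A n) = ennreal (F (s - s / real (Suc n)) - F 0)"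
        unfolding A_def by (intro emeasure_interval_measure_Ioc) (auto intro: mono right_cont)
      also have "\<dots> \<le> ennreal c" using \<open>0 \<le> F 0\<close> bound[of "s - s / real (Suc n)"] \<open>0 < s\<close>
        by (intro ennreal_leI) auto
      finally show ?thesis .
    qed (simp add: A_def)
  qed
  finally show ?thesis .
qed

definition thinning :: "(real \<times> real) set \<Rightarrow> (real \<Rightarrow> real) \<Rightarrow> real \<Rightarrow> (real \<times> real) set" where
  "thinning P g t = {(z, s). (z, s) \<in> P \<and> 0 < s \<and> s \<le> t \<and> z \<le> g s}"

lemma thinning_mono: "t \<le> t' \<Longrightarrow> thinning P g t \<subseteq> thinning P g t'"
  unfolding thinning_def by auto

lemma thinning_locally_const_at_right:
  assumes "finite (thinning P g (a + 1))"
  shows "\<exists>d>0. \<forall>v. a < v \<and> v < a + d \<longrightarrow> thinning P g v = thinning P g a"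
proof -
  define Ts where "Ts = {s. \<exists>z. (z, s) \<in> thinning P g (a + 1) \<and> a < s}"
  have "Ts \<subseteq> snd ` thinning P g (a + 1)" unfolding Ts_def by force
  then have "finite Ts" using assms finite_surj by blast
  define d where "d = (if Ts = {} then 1 else min 1 (Min Ts - a))"
  have "0 < d" "d \<le> 1" using \<open>finite Ts\<close> unfolding d_def by (auto simp: Ts_def)
  moreover have "thinning P g v = thinning P g a" if v: "a < v" "v < a + d" for v
  proof
    show "thinning P g a \<subseteq> thinning P g v" using v thinning_mono by simp
    show "thinning P g v \<subseteq> thinning P g a"
    proof clarify
      fix z s assume zs: "(z, s) \<in> thinning P g v"
      then have "s \<le> v" unfolding thinning_def by simp
      have "\<not> a < s"
      proof
        assume "a < s"
        then have "s \<in> Ts"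
          using zs thinning_mono[of v "a + 1" P g] v \<open>d \<le> 1\<close> unfolding Ts_def by auto
        then have "Ts \<noteq> {}" "Min Ts \<le> s" using Min_le[OF \<open>finite Ts\<close>] by auto
        then have "a + d \<le> s" unfolding d_def by auto
        then show False using \<open>s \<le> v\<close> v by simp
      qed
      then show "(z, s) \<in> thinning P g a" using zs unfolding thinning_def by auto
    qed
  qed
  ultimately show ?thesis by blast
qed

lemma card_thinning_le_add_card:
  assumes fin: "finite (thinning P g b)" and "a \<le> b"
    and g_le: "\<And>s. a < s \<Longrightarrow> s \<le> b \<Longrightarrow> g s \<le> L"
    and P: "P \<subseteq> {0..} \<times> {0..}" and fin_strip: "finite (P \<inter> strip L a b)"
  shows "card (thinning P g b) \<le> card (thinning P g a) + card (P \<inter> strip L a b)"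
proof -
  define D where "D = {x \<in> thinning P g b. a < snd x}"
  have "thinning P g b = thinning P g a \<union> D" "thinning P g a \<inter> D = {}"
    using \<open>a \<le> b\<close> unfolding D_def thinning_def by auto
  moreover have "finite (thinning P g a)" using fin thinning_mono[OF \<open>a \<le> b\<close>] finite_subset by blast
  moreover have "finite D" using fin unfolding D_def by auto
  moreover have "D \<subseteq> P \<inter> strip L a b"
    using P g_le unfolding D_def thinning_def by fastforce
  then have "card D \<le> card (P \<inter> strip L a b)" using fin_strip by (rule card_mono[rotated])
  ultimately show ?thesis by (simp add: card_Un_disjoint)
qed

definition continuity_modulus :: "real \<Rightarrow> real \<Rightarrow> (real \<Rightarrow> real) \<Rightarrow> ereal" where
  "continuity_modulus T d f =
     (SUP (s, t) \<in> {(s, t). 0 \<le> s \<and> s \<le> t \<and> t \<le> T \<and> \<bar>t - s\<bar> \<le> d}. ereal \<bar>f t - f s\<bar>)"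

locale hawkes_path =
  fixes P :: "(real \<times> real) set" and \<phi> h :: "real \<Rightarrow> real" and \<alpha> \<epsilon> :: real
    and F :: "real \<Rightarrow> nat"
  assumes eps_pos: "0 < \<epsilon>"
    and phi_lipschitz: "\<alpha>-lipschitz_on UNIV \<phi>"
    and points_nonneg: "P \<subseteq> {0..} \<times> {0..}"
    and points_locally_finite: "\<And>L b. finite (P \<inter> strip L 0 b)"
    and count_eq: "\<And>t. F t = card {(z, s). (z, s) \<in> P \<and> 0 < s \<and> s \<le> t \<and>
          z \<le> (1 / \<epsilon>) * \<phi> (LINT u:{0<..<s}|interval_measure (\<lambda>v. real (F v)). \<epsilon> * h (s - u))}"
begin

definition intensity :: "real \<Rightarrow> real" where
  "intensity s = (1 / \<epsilon>) * \<phi> (LINT u:{0<..<s}|interval_measure (\<lambda>v. real (F v)). \<epsilon> * h (s - u))"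

text \<open>Use this equation only instantiated: intensity depends on F, so as a general
  rewrite rule it makes the simplifier loop.\<close>
lemma count_eq_card_thinning: "F t = card (thinning P intensity t)"
  unfolding thinning_def intensity_def by (rule count_eq)

lemma finite_strip: "0 \<le> a \<Longrightarrow> finite (P \<inter> strip L a b)"
  by (rule finite_subset[OF _ points_locally_finite[of L b]]) auto

lemma count_eq_0_if_nonpos:
  assumes "t \<le> 0" shows "F t = 0"
proof -
  have "thinning P intensity t = {}" using assms unfolding thinning_def by auto
  then show ?thesis by (simp add: count_eq_card_thinning[of t])
qed

lemma finite_thinning_if_null:
  assumes null: "\<And>X. emeasure (interval_measure (\<lambda>v. real (F v))) X = 0"
  shows "finite (thinning P intensity t)"
proof -
  have "intensity s = \<phi> 0 / \<epsilon>" for s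
  proof -
    have "UNIV \<in> null_sets (interval_measure (\<lambda>v. real (F v)))"
      using null by (auto simp: null_sets_def)
    then have I0: "(LINT u:{0<..<s}|interval_measure (\<lambda>v. real (F v)). \<epsilon> * h (s - u)) = 0"
      unfolding set_lebesgue_integral_def by (intro integral_eq_zero_AE AE_I'[of UNIV]) auto
    show ?thesis unfolding intensity_def I0 by simp
  qed
  then have "thinning P intensity t \<subseteq> P \<inter> strip (\<phi> 0 / \<epsilon>) 0 t"
    using points_nonneg unfolding thinning_def by auto
  then show ?thesis using points_locally_finite finite_subset by blast
qed

lemma mono_count: "mono F"
proof (rule ccontr)
  assume "\<not> mono F"
  then obtain a b where ab: "a \<le> b" "F b < F a" unfolding mono_def by (auto simp: not_le)
  have "0 \<le> a"
  proof (rule ccontr)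
    assume "\<not> 0 \<le> a"
    then show False using ab count_eq_0_if_nonpos[of a] by simp
  qed
  have null: "emeasure (interval_measure (\<lambda>v. real (F v))) X = 0" for X
    using ab \<open>0 \<le> a\<close> count_eq_0_if_nonpos[of 0] by (intro emeasure_interval_measure_not_mono[of 0 a b]) auto
  have "F a \<le> F b"
    unfolding count_eq_card_thinning[of a] count_eq_card_thinning[of b]
    by (rule card_mono[OF finite_thinning_if_null[OF null] thinning_mono[OF ab(1)]])
  then show False using ab by simp
qed

text \<open>An infinite thinning would force F = 0 from that time on, hence everywhere by monotonicity;
  but then the driving measure is null and the intensity is constant.\<close>
lemma finite_thinning: "finite (thinning P intensity t)"
proof (rule ccontr)
  assume inf: "infinite (thinning P intensity t)"
  have "F v = 0" for v
  proof (cases "t \<le> v")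
    case True
    then have "infinite (thinning P intensity v)" using inf finite_subset[OF thinning_mono] by blast
    then show ?thesis by (simp add: count_eq_card_thinning[of v])
  next
    case False
    then have "F v \<le> F t" using mono_count by (simp add: mono_def)
    then show ?thesis using inf by (simp add: count_eq_card_thinning[of t])
  qed
  then have "interval_measure (\<lambda>v. real (F v)) = interval_measure (\<lambda>v. 0)" by simp
  then have "emeasure (interval_measure (\<lambda>v. real (F v))) X = 0" for X
    by (simp add: interval_measure_def extend_measure_def emeasure_measure_of_conv)
  then show False using finite_thinning_if_null inf by blast
qed

lemma count_locally_const_at_right: "\<exists>d>0. \<forall>v. a < v \<and> v < a + d \<longrightarrow> F v = F a"
proof -
  obtain d where "d > 0"
    and const: "\<forall>v. a < v \<and> v < a + d \<longrightarrow> thinning P intensity v = thinning P intensity a"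
    using thinning_locally_const_at_right[OF finite_thinning] by blast
  have "F v = F a" if "a < v" "v < a + d" for v
    unfolding count_eq_card_thinning[of v] count_eq_card_thinning[of a] using const that by simp
  with \<open>d > 0\<close> show ?thesis by blast
qed

lemma count_continuous_at_right: "continuous (at_right a) (\<lambda>v. real (F v))"
proof -
  obtain d where "d > 0" and "\<forall>v. a < v \<and> v < a + d \<longrightarrow> F v = F a"
    using count_locally_const_at_right by blast
  then have "\<forall>\<^sub>F v in at_right a. real (F v) = real (F a)"
    unfolding eventually_at_right_field by (intro exI[of _ "a + d"]) auto
  then have "((\<lambda>v. real (F v)) \<longlongrightarrow> real (F a)) (at_right a)"
    by (rule tendsto_eventually)
  then show ?thesis by (simp add: continuous_within)
qed

lemma intensity_le:
  assumes h_bound: "\<And>x. 0 \<le> x \<Longrightarrow> x \<le> T \<Longrightarrow> \<bar>h x\<bar> \<le> H" and "0 \<le> H"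
    and "0 < s" "s \<le> T" and level: "\<And>v. v < s \<Longrightarrow> \<epsilon> * real (F v) \<le> c"
  shows "intensity s \<le> (\<phi> 0 + \<alpha> * H * c) / \<epsilon>"
proof -
  let ?\<mu> = "interval_measure (\<lambda>v. real (F v))"
  let ?I = "LINT u:{0<..<s}|?\<mu>. \<epsilon> * h (s - u)"
  have "0 \<le> \<alpha>" using phi_lipschitz lipschitz_on_nonneg by blast
  have "0 \<le> c" using level[of 0] \<open>0 < s\<close> by (simp add: count_eq_0_if_nonpos)
  have "emeasure ?\<mu> {0<..<s} \<le> ennreal (c / \<epsilon>)"
    using mono_count count_continuous_at_right \<open>0 < s\<close> level eps_pos
    by (intro emeasure_interval_measure_Ioo_le) (auto simp: mono_def field_simps)
  then have fin: "emeasure ?\<mu> {0<..<s} < \<infinity>" and "measure ?\<mu> {0<..<s} \<le> c / \<epsilon>"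
    using \<open>0 \<le> c\<close> eps_pos by (auto simp: measure_def enn2real_leI le_less_trans)
  have "\<bar>?I\<bar> \<le> (\<epsilon> * H) * measure ?\<mu> {0<..<s}"
    using fin eps_pos \<open>0 < s\<close> \<open>s \<le> T\<close>
    by (intro set_integral_abs_le) (auto simp: abs_mult intro!: h_bound)
  also have "\<dots> \<le> (\<epsilon> * H) * (c / \<epsilon>)"
    using \<open>measure ?\<mu> {0<..<s} \<le> c / \<epsilon>\<close> eps_pos \<open>0 \<le> H\<close> by (intro mult_left_mono) auto
  also have "\<dots> = H * c" using eps_pos by simp
  finally have "\<bar>?I\<bar> \<le> H * c" .
  moreover have "\<phi> ?I \<le> \<phi> 0 + \<alpha> * \<bar>?I\<bar>"
    using lipschitz_onD[OF phi_lipschitz, of ?I 0] by (simp add: dist_real_def abs_le_iff)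
  ultimately have "\<phi> ?I \<le> \<phi> 0 + \<alpha> * H * c"
    using \<open>0 \<le> \<alpha>\<close> by (smt (verit) mult.assoc mult_left_mono)
  then show ?thesis unfolding intensity_def using eps_pos by (simp add: field_simps)
qed

text \<open>Barrier argument: by right continuity, the first time u at which \<epsilon>F exceeds cb is
  attained; up to u the intensity stays below the strip height, so the jumps on (a,u]
  are points of the strip.\<close>
lemma count_le_of_strip_count:
  assumes h_bound: "\<And>x. 0 \<le> x \<Longrightarrow> x \<le> T \<Longrightarrow> \<bar>h x\<bar> \<le> H" and "0 \<le> H"
    and "0 \<le> a" "a \<le> b" "b \<le> T" and start: "\<epsilon> * real (F a) \<le> ca"
    and budget: "ca + \<epsilon> * real (card (P \<inter> strip ((\<phi> 0 + \<alpha> * H * cb) / \<epsilon>) a b)) \<le> cb"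
    and "v \<le> b"
  shows "\<epsilon> * real (F v) \<le> cb"
proof (rule ccontr)
  let ?L = "(\<phi> 0 + \<alpha> * H * cb) / \<epsilon>"
  assume exceed: "\<not> ?thesis"
  define U where "U = {w. w \<le> b \<and> cb < \<epsilon> * real (F w)}"
  define u where "u = Inf U"
  have "v \<in> U" using \<open>v \<le> b\<close> exceed unfolding U_def by simp
  have "ca \<le> cb" using budget eps_pos by (smt (verit) of_nat_0_le_iff mult_nonneg_nonneg)
  have after_a: "a < w" if "w \<in> U" for w
  proof (rule ccontr)
    assume "\<not> a < w"
    then have "\<epsilon> * real (F w) \<le> \<epsilon> * real (F a)"
      using mono_count eps_pos by (simp add: mono_def)
    then show False using that start \<open>ca \<le> cb\<close> unfolding U_def by simp
  qed
  then have "bdd_below U" by (meson bdd_below.I less_imp_le)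
  then have u_le: "u \<le> w" if "w \<in> U" for w unfolding u_def using cInf_lower that by blast
  have "u \<le> b" using u_le[OF \<open>v \<in> U\<close>] \<open>v \<le> b\<close> by simp
  have "u \<in> U"
  proof -
    obtain d where "d > 0" and const: "\<forall>w. u < w \<and> w < u + d \<longrightarrow> F w = F u"
      using count_locally_const_at_right by blast
    obtain w where "w \<in> U" "w < u + d"
      using cInf_lessD[of U "u + d"] \<open>v \<in> U\<close> \<open>d > 0\<close> unfolding u_def by fastforce
    then show ?thesis using u_le[of w] const \<open>u \<le> b\<close> unfolding U_def by (cases "w = u") auto
  qed
  have below: "\<epsilon> * real (F w) \<le> cb" if "w < u" for w
    using u_le[of w] that \<open>u \<le> b\<close> unfolding U_def by force
  have strip_sub: "P \<inter> strip ?L a u \<subseteq> P \<inter> strip ?L a b"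
    using \<open>u \<le> b\<close> by auto
  have "F u \<le> F a + card (P \<inter> strip ?L a u)"
    unfolding count_eq_card_thinning[of u] count_eq_card_thinning[of a]
  proof (rule card_thinning_le_add_card[OF finite_thinning])
    show "a \<le> u" using after_a[OF \<open>u \<in> U\<close>] by simp
    show "intensity s \<le> ?L" if "a < s" "s \<le> u" for s
      using that \<open>0 \<le> a\<close> \<open>u \<le> b\<close> \<open>b \<le> T\<close> below by (intro intensity_le[OF h_bound \<open>0 \<le> H\<close>]) auto
  qed (use points_nonneg finite_strip \<open>0 \<le> a\<close> in auto)
  also have "\<dots> \<le> F a + card (P \<inter> strip ?L a b)"
    using card_mono[OF finite_strip strip_sub] \<open>0 \<le> a\<close> by simp
  finally have "\<epsilon> * real (F u) \<le> \<epsilon> * real (F a) + \<epsilon> * real (card (P \<inter> strip ?L a b))"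
    using eps_pos by (simp flip: distrib_left)
  moreover have "cb < \<epsilon> * real (F u)" using \<open>u \<in> U\<close> unfolding U_def by simp
  ultimately show False using start budget by linarith
qed

lemma count_le_doubling:
  assumes h_bound: "\<And>x. 0 \<le> x \<Longrightarrow> x \<le> T \<Longrightarrow> \<bar>h x\<bar> \<le> H" and "0 \<le> H" and "0 \<le> T"
    and few_points: "\<And>j. j < n \<Longrightarrow> \<epsilon> * real (card (P \<inter>
        strip ((\<phi> 0 + \<alpha> * H * (2 ^ Suc j - 1)) / \<epsilon>) (real j * T / real n) (real (Suc j) * T / real n)))
        \<le> 2 ^ j"
    and "j \<le> n" "v \<le> real j * T / real n"
  shows "\<epsilon> * real (F v) \<le> 2 ^ j - 1"
  using \<open>j \<le> n\<close> \<open>v \<le> real j * T / real n\<close>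
proof (induction j arbitrary: v)
  case 0
  then show ?case by (simp add: count_eq_0_if_nonpos)
next
  case (Suc j)
  let ?a = "real j * T / real n" and ?b = "real (Suc j) * T / real n"
  have "real (Suc j) * T \<le> real n * T"
    using Suc.prems \<open>0 \<le> T\<close> by (intro mult_right_mono) auto
  then have "?b \<le> T"
    using Suc.prems by (simp add: divide_le_eq mult.commute)
  moreover have "0 \<le> ?a" "?a \<le> ?b"
    using \<open>0 \<le> T\<close> by (auto intro!: divide_right_mono mult_right_mono)
  moreover have "\<epsilon> * real (F ?a) \<le> 2 ^ j - 1"
    using Suc.IH[of ?a] Suc.prems(1) by simp
  moreover have "(2 ^ j - 1) + \<epsilon> * real (card (P \<inter>
      strip ((\<phi> 0 + \<alpha> * H * (2 ^ Suc j - 1)) / \<epsilon>) ?a ?b)) \<le> 2 ^ Suc j - 1"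
    using few_points[of j] Suc.prems(1) by simp
  ultimately show ?case
    using count_le_of_strip_count[OF h_bound \<open>0 \<le> H\<close>] Suc.prems(2) by blast
qed

lemma continuity_modulus_count_le:
  assumes h_bound: "\<And>x. 0 \<le> x \<Longrightarrow> x \<le> T \<Longrightarrow> \<bar>h x\<bar> \<le> H" and "0 \<le> H"
    and level: "\<And>v. v \<le> T \<Longrightarrow> \<epsilon> * real (F v) \<le> C" and "0 < m"
    and few_points: "\<And>i::nat. i \<le> nat \<lfloor>m * T\<rfloor> \<Longrightarrow>
        \<epsilon> * real (card (P \<inter> strip ((\<phi> 0 + \<alpha> * H * C) / \<epsilon>) (real i / m) ((real i + 2) / m))) \<le> d"
  shows "continuity_modulus T (1 / m) (\<lambda>t. \<epsilon> * real (F t)) \<le> ereal d"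
  unfolding continuity_modulus_def
proof (rule SUP_least, clarify)
  fix s t assume st: "0 \<le> s" "s \<le> t" "t \<le> T" "\<bar>t - s\<bar> \<le> 1 / m"
  let ?L = "(\<phi> 0 + \<alpha> * H * C) / \<epsilon>"
  define i where "i = nat \<lfloor>m * s\<rfloor>"
  have i: "real i \<le> m * s" "m * s < real i + 1"
    unfolding i_def using st \<open>0 < m\<close> by (auto simp: of_nat_nat)
  have "i \<le> nat \<lfloor>m * T\<rfloor>"
    unfolding i_def using st \<open>0 < m\<close> by (intro nat_mono floor_mono mult_left_mono) auto
  have "t \<le> (real i + 2) / m"
    using st i \<open>0 < m\<close> by (simp add: field_simps)
  moreover have "real i / m \<le> s" using i \<open>0 < m\<close> by (simp add: divide_le_eq mult.commute)
  ultimately have strip_sub: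
    "P \<inter> strip ?L s t \<subseteq> P \<inter> strip ?L (real i / m) ((real i + 2) / m)"
    by auto
  have "F t \<le> F s + card (P \<inter> strip ?L s t)"
    unfolding count_eq_card_thinning[of t] count_eq_card_thinning[of s]
    using st level points_nonneg finite_strip
    by (intro card_thinning_le_add_card[OF finite_thinning] intensity_le[OF h_bound \<open>0 \<le> H\<close>]) auto
  also have "\<dots> \<le> F s + card (P \<inter> strip ?L (real i / m) ((real i + 2) / m))"
    using card_mono[OF finite_strip strip_sub] \<open>0 < m\<close> by simp
  finally have "\<epsilon> * real (F t) - \<epsilon> * real (F s) \<le> d"
    using few_points[OF \<open>i \<le> nat \<lfloor>m * T\<rfloor>\<close>] eps_pos
    by (smt (verit) of_nat_add of_nat_le_iff distrib_left mult_left_mono)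
  moreover have "F s \<le> F t" using mono_count st by (simp add: mono_def)
  ultimately show "ereal \<bar>\<epsilon> * real (F t) - \<epsilon> * real (F s)\<bar> \<le> ereal d"
    using eps_pos by simp
qed

lemma continuity_modulus_le_if_few_points:
  assumes h_bound: "\<And>x. 0 \<le> x \<Longrightarrow> x \<le> T \<Longrightarrow> \<bar>h x\<bar> \<le> H" and "0 \<le> H" "0 \<le> T" "0 < n" "0 < m"
    and few_in_boxes: "\<And>j. j < n \<Longrightarrow> \<epsilon> * real (card (P \<inter> strip ((\<phi> 0 + \<alpha> * H * (2 ^ Suc j - 1)) / \<epsilon>)
        (real j * T / real n) (real (Suc j) * T / real n))) \<le> 2 ^ j"
    and few_in_windows: "\<And>i::nat. i \<le> nat \<lfloor>m * T\<rfloor> \<Longrightarrow> \<epsilon> * real (card (P \<inter>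
        strip ((\<phi> 0 + \<alpha> * H * (2 ^ n - 1)) / \<epsilon>) (real i / m) ((real i + 2) / m))) \<le> d"
  shows "continuity_modulus T (1 / m) (\<lambda>t. \<epsilon> * real (F t)) \<le> ereal d"
proof (rule continuity_modulus_count_le[OF h_bound \<open>0 \<le> H\<close> _ \<open>0 < m\<close> few_in_windows])
  show "\<epsilon> * real (F v) \<le> 2 ^ n - 1" if "v \<le> T" for v
    using count_le_doubling[OF h_bound \<open>0 \<le> H\<close> \<open>0 \<le> T\<close> few_in_boxes, of n v] that \<open>0 < n\<close> by simp
qed

end

section \<open>Probability of a large modulus of continuity\<close>

lemma (in prob_space) prob_le_card_mult_if_AE_covered:
  assumes cover: "AE \<omega> in M. \<omega> \<in> E \<longrightarrow> (\<exists>i\<in>I. \<omega> \<in> A i)" and "finite I"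
    and events: "\<And>i. i \<in> I \<Longrightarrow> A i \<in> events" and bound: "\<And>i. i \<in> I \<Longrightarrow> prob (A i) \<le> p"
  shows "prob E \<le> real (card I) * p"
proof -
  have "prob E \<le> prob (\<Union>i\<in>I. A i)"
    using cover events \<open>finite I\<close> by (intro finite_measure_mono_AE) auto
  also have "\<dots> \<le> (\<Sum>i\<in>I. prob (A i))"
    using events \<open>finite I\<close> by (intro finite_measure_subadditive_finite) auto
  also have "\<dots> \<le> real (card I) * p"
    using bound sum_bounded_above[of I "\<lambda>i. prob (A i)" p] by simp
  finally show ?thesis .
qed

lemma hawkes_path_AE:
  assumes PRM: "poisson_random_measure M Pts" and "0 < \<epsilon>" and lip: "\<alpha>-lipschitz_on UNIV \<phi>"
    and sol: "hawkes_solution M Pts \<phi> h \<epsilon> Nf"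
  shows "AE \<omega> in M. hawkes_path (Pts \<omega>) \<phi> h \<alpha> \<epsilon> (Nf \<omega>)"
proof -
  interpret prob_space M using PRM unfolding poisson_random_measure_def by blast
  have "AE \<omega> in M. \<forall>k::nat. finite (Pts \<omega> \<inter> strip (real k) 0 (real k))"
    unfolding AE_all_countable by (intro allI poisson_random_measure_strip_finite[OF PRM]) auto
  moreover have "AE \<omega> in M. Pts \<omega> \<subseteq> {0..} \<times> {0..}"
    using PRM by (intro AE_I2) (auto simp: poisson_random_measure_def)
  moreover note sol[unfolded hawkes_solution_def]
  ultimately show ?thesis
  proof eventually_elim
    case (elim \<omega>)
    have locally_finite: "finite (Pts \<omega> \<inter> strip L 0 b)" for L b
    proof -
      obtain k :: nat where "max L b \<le> real k" using real_arch_simple by blast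
      then have "Pts \<omega> \<inter> strip L 0 b \<subseteq> Pts \<omega> \<inter> strip (real k) 0 (real k)" by auto
      then show ?thesis using elim(1) finite_subset by blast
    qed
    show ?case
      by (rule hawkes_path.intro[OF \<open>0 < \<epsilon>\<close> lip elim(2) locally_finite elim(3)[rule_format]])
  qed
qed

lemma doubling_strip_area_le:
  fixes c a \<epsilon> T \<rho> :: real
  assumes "0 \<le> c" "0 \<le> a" "0 < \<epsilon>" "0 \<le> T" "0 < n"
    and n_large: "exp 1 * (c + 2 * a) * T \<le> exp (- \<rho>) * real n"
  shows "exp 1 * ((c + a * (2 ^ Suc j - 1)) / \<epsilon> * (real (Suc j) * T / real n - real j * T / real n))
    \<le> exp (- \<rho>) * (2 ^ j / \<epsilon>)"
proof -
  let ?h = "c + a * (2 ^ Suc j - 1)"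
  have width: "real (Suc j) * T / real n - real j * T / real n = T / real n"
    by (simp add: diff_divide_distrib[symmetric] algebra_simps)
  have "exp 1 * (?h / \<epsilon> * (real (Suc j) * T / real n - real j * T / real n))
      = exp 1 * T / (\<epsilon> * real n) * ?h"
    unfolding width by simp
  also have "\<dots> \<le> exp 1 * T / (\<epsilon> * real n) * ((c + 2 * a) * 2 ^ j)"
  proof -
    have "c \<le> c * 2 ^ j" using \<open>0 \<le> c\<close> by (simp add: mult_le_cancel_left1)
    then have "?h \<le> (c + 2 * a) * 2 ^ j" using \<open>0 \<le> a\<close> by (simp add: algebra_simps)
    then show ?thesis using \<open>0 \<le> T\<close> \<open>0 < \<epsilon>\<close> by (intro mult_left_mono) auto
  qed
  also have "\<dots> = exp 1 * (c + 2 * a) * T * (2 ^ j / (\<epsilon> * real n))"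
    by (simp add: field_simps)
  also have "\<dots> \<le> exp (- \<rho>) * real n * (2 ^ j / (\<epsilon> * real n))"
    using n_large \<open>0 < \<epsilon>\<close> by (intro mult_right_mono) auto
  also have "\<dots> = exp (- \<rho>) * (2 ^ j / \<epsilon>)" using \<open>0 < n\<close> by simp
  finally show ?thesis .
qed

lemma window_strip_area_le:
  fixes K \<epsilon> m \<rho> \<delta> :: real
  assumes "0 < \<epsilon>" "0 < m" and m_large: "4 * exp 1 * K \<le> exp (- \<rho>) * \<delta> * m"
  shows "exp 1 * (K / \<epsilon> * ((real i + 2) / m - real i / m)) \<le> exp (- \<rho>) * (\<delta> / 2 / \<epsilon>)"
proof -
  have "exp 1 * (K / \<epsilon> * ((real i + 2) / m - real i / m)) = 4 * exp 1 * K / (2 * \<epsilon> * m)"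
    using assms by (simp add: field_simps)
  also have "\<dots> \<le> exp (- \<rho>) * \<delta> * m / (2 * \<epsilon> * m)"
    using assms by (intro divide_right_mono) auto
  also have "\<dots> = exp (- \<rho>) * (\<delta> / 2 / \<epsilon>)" using assms by simp
  finally show ?thesis .
qed

lemma poisson_doubling_strip_card_ge:
  assumes PRM: "poisson_random_measure M Pts"
    and "0 \<le> c" "0 \<le> a" "0 < \<epsilon>" "0 \<le> T" "0 < n" "0 \<le> \<rho>"
    and n_large: "exp 1 * (c + 2 * a) * T \<le> exp (- \<rho>) * real n"
  shows "{\<omega> \<in> space M. 2 ^ j / \<epsilon> \<le> real (card (Pts \<omega> \<inter> strip ((c + a * (2 ^ Suc j - 1)) / \<epsilon>)
      (real j * T / real n) (real (Suc j) * T / real n)))} \<in> sets M"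
    and "measure M {\<omega> \<in> space M. 2 ^ j / \<epsilon> \<le> real (card (Pts \<omega> \<inter> strip ((c + a * (2 ^ Suc j - 1)) / \<epsilon>)
      (real j * T / real n) (real (Suc j) * T / real n)))} \<le> exp (- \<rho> / \<epsilon>)"
    (is "measure M ?A \<le> _")
proof -
  have "(1::real) \<le> 2 ^ Suc j" by (rule one_le_power) simp
  then have height: "0 \<le> (c + a * (2 ^ Suc j - 1)) / \<epsilon>" using assms by simp
  have times: "0 \<le> real j * T / real n" "real j * T / real n \<le> real (Suc j) * T / real n"
    using \<open>0 \<le> T\<close> by (auto intro!: divide_right_mono mult_right_mono)
  note tail = poisson_random_measure_strip_card_ge[OF PRM height times \<open>0 \<le> \<rho>\<close>
      doubling_strip_area_le[OF assms(2-6) n_large]]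
  show "?A \<in> sets M" by (rule tail(1))
  have "\<rho> / \<epsilon> \<le> \<rho> * (2 ^ j / \<epsilon>)"
    using \<open>0 \<le> \<rho>\<close> \<open>0 < \<epsilon>\<close> by (simp add: divide_right_mono mult_le_cancel_left1)
  then show "measure M ?A \<le> exp (- \<rho> / \<epsilon>)" using tail(2) by (simp add: order_trans)
qed

lemma poisson_window_strip_card_ge:
  assumes PRM: "poisson_random_measure M Pts" and "0 \<le> K" "0 < \<epsilon>" "0 < m" "0 \<le> \<rho>"
    and m_large: "4 * exp 1 * K \<le> exp (- \<rho>) * \<delta> * m"
  shows "{\<omega> \<in> space M. \<delta> / 2 / \<epsilon> \<le>
      real (card (Pts \<omega> \<inter> strip (K / \<epsilon>) (real i / m) ((real i + 2) / m)))} \<in> sets M"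
    and "measure M {\<omega> \<in> space M. \<delta> / 2 / \<epsilon> \<le>
      real (card (Pts \<omega> \<inter> strip (K / \<epsilon>) (real i / m) ((real i + 2) / m)))}
      \<le> exp (- \<rho> * (\<delta> / 2 / \<epsilon>))" (is "measure M ?A \<le> _")
proof -
  have "0 \<le> K / \<epsilon>" "0 \<le> real i / m" "real i / m \<le> (real i + 2) / m"
    using assms by (auto intro!: divide_right_mono)
  from poisson_random_measure_strip_card_ge[OF PRM this \<open>0 \<le> \<rho>\<close>
      window_strip_area_le[OF \<open>0 < \<epsilon>\<close> \<open>0 < m\<close> m_large]]
  show "?A \<in> sets M" "measure M ?A \<le> exp (- \<rho> * (\<delta> / 2 / \<epsilon>))" by auto
qed

lemma hawkes_modulus_prob_le:
  assumes PRM: "poisson_random_measure M Pts" and "0 < T" "0 \<le> \<phi> 0" "0 \<le> \<alpha>"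
    and lip: "\<alpha>-lipschitz_on UNIV \<phi>"
    and h_bound: "\<And>x. 0 \<le> x \<Longrightarrow> x \<le> T \<Longrightarrow> \<bar>h x\<bar> \<le> H" and "0 \<le> H"
    and sol: "hawkes_solution M Pts \<phi> h \<epsilon> Nf"
    and "0 < \<delta>" "0 < \<epsilon>" "0 < m" "0 < n" "0 \<le> \<rho>"
    and n_large: "exp 1 * (\<phi> 0 + 2 * (\<alpha> * H)) * T \<le> exp (- \<rho>) * real n"
    and m_large: "4 * exp 1 * (\<phi> 0 + \<alpha> * H * (2 ^ n - 1)) \<le> exp (- \<rho>) * \<delta> * m"
  shows "measure M {\<omega> \<in> space M. ereal \<delta> \<le> continuity_modulus T (1 / m) (\<lambda>t. \<epsilon> * real (Nf \<omega> t))}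
    \<le> real (n + nat \<lfloor>m * T\<rfloor> + 1) * exp (- \<rho> * min 1 (\<delta> / 2) / \<epsilon>)"
proof -
  interpret prob_space M using PRM unfolding poisson_random_measure_def by blast
  let ?E = "{\<omega> \<in> space M. ereal \<delta> \<le> continuity_modulus T (1 / m) (\<lambda>t. \<epsilon> * real (Nf \<omega> t))}"
  let ?I = "{..<n} <+> {..nat \<lfloor>m * T\<rfloor>}"
  let ?p = "exp (- \<rho> * min 1 (\<delta> / 2) / \<epsilon>)"
  define crowded where "crowded R x = {\<omega> \<in> space M. x / \<epsilon> \<le> real (card (Pts \<omega> \<inter> R))}" for R x
  define bad where "bad k = (case k of
      Inl j \<Rightarrow> crowded (strip ((\<phi> 0 + \<alpha> * H * (2 ^ Suc j - 1)) / \<epsilon>)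
                  (real j * T / real n) (real (Suc j) * T / real n)) (2 ^ j)
    | Inr i \<Rightarrow> crowded (strip ((\<phi> 0 + \<alpha> * H * (2 ^ n - 1)) / \<epsilon>)
                  (real i / m) ((real i + 2) / m)) (\<delta> / 2))" for k
  have "bad k \<in> events \<and> prob (bad k) \<le> ?p" for k
  proof (cases k)
    case (Inl j)
    note tail = poisson_doubling_strip_card_ge[OF PRM \<open>0 \<le> \<phi> 0\<close> mult_nonneg_nonneg[OF \<open>0 \<le> \<alpha>\<close> \<open>0 \<le> H\<close>]
        \<open>0 < \<epsilon>\<close> less_imp_le[OF \<open>0 < T\<close>] \<open>0 < n\<close> \<open>0 \<le> \<rho>\<close> n_large, of j]
    have "\<rho> * min 1 (\<delta> / 2) / \<epsilon> \<le> \<rho> / \<epsilon>"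
      using \<open>0 \<le> \<rho>\<close> \<open>0 < \<epsilon>\<close> by (intro divide_right_mono mult_left_le) auto
    then have "exp (- \<rho> / \<epsilon>) \<le> ?p" by simp
    then show ?thesis
      using tail(1) order_trans[OF tail(2)] unfolding bad_def Inl sum.case(1) crowded_def by blast
  next
    case (Inr i)
    have "0 \<le> \<phi> 0 + \<alpha> * H * (2 ^ n - 1)" using \<open>0 \<le> \<phi> 0\<close> \<open>0 \<le> \<alpha>\<close> \<open>0 \<le> H\<close> by simp
    note tail = poisson_window_strip_card_ge[OF PRM this \<open>0 < \<epsilon>\<close> \<open>0 < m\<close> \<open>0 \<le> \<rho>\<close> m_large, of i]
    have "\<rho> * min 1 (\<delta> / 2) / \<epsilon> \<le> \<rho> * (\<delta> / 2) / \<epsilon>"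
      using \<open>0 \<le> \<rho>\<close> \<open>0 < \<epsilon>\<close> by (intro divide_right_mono mult_left_mono) auto
    then have "exp (- \<rho> * (\<delta> / 2 / \<epsilon>)) \<le> ?p" by simp
    then show ?thesis
      using tail(1) order_trans[OF tail(2)] unfolding bad_def Inr sum.case(2) crowded_def by blast
  qed
  moreover have "AE \<omega> in M. \<omega> \<in> ?E \<longrightarrow> (\<exists>k\<in>?I. \<omega> \<in> bad k)"
    using hawkes_path_AE[OF PRM \<open>0 < \<epsilon>\<close> lip sol]
  proof eventually_elim
    case (elim \<omega>)
    show ?case
    proof (rule impI, rule ccontr)
      assume E: "\<omega> \<in> ?E" and good: "\<not> (\<exists>k\<in>?I. \<omega> \<in> bad k)"
      have few: "\<epsilon> * real (card (Pts \<omega> \<inter> R)) \<le> x" if "k \<in> ?I" "bad k = crowded R x" for k R x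
      proof -
        have "\<omega> \<notin> crowded R x" "\<omega> \<in> space M" using good that E by auto
        then have "real (card (Pts \<omega> \<inter> R)) < x / \<epsilon>" unfolding crowded_def by simp
        then show ?thesis using \<open>0 < \<epsilon>\<close> by (simp add: pos_less_divide_eq mult.commute)
      qed
      have "continuity_modulus T (1 / m) (\<lambda>t. \<epsilon> * real (Nf \<omega> t)) \<le> ereal (\<delta> / 2)"
      proof (rule hawkes_path.continuity_modulus_le_if_few_points[OF elim h_bound \<open>0 \<le> H\<close>])
        show "\<epsilon> * real (card (Pts \<omega> \<inter> strip ((\<phi> 0 + \<alpha> * H * (2 ^ Suc j - 1)) / \<epsilon>)
            (real j * T / real n) (real (Suc j) * T / real n))) \<le> 2 ^ j" if "j < n" for j
          using that by (intro few[of "Inl j"]) (auto simp: bad_def)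
        show "\<epsilon> * real (card (Pts \<omega> \<inter> strip ((\<phi> 0 + \<alpha> * H * (2 ^ n - 1)) / \<epsilon>)
            (real i / m) ((real i + 2) / m))) \<le> \<delta> / 2" if "i \<le> nat \<lfloor>m * T\<rfloor>" for i
          using that by (intro few[of "Inr i"]) (auto simp: bad_def)
      qed (use \<open>0 < T\<close> \<open>0 < n\<close> \<open>0 < m\<close> in auto)
      moreover have "ereal \<delta> \<le> continuity_modulus T (1 / m) (\<lambda>t. \<epsilon> * real (Nf \<omega> t))"
        using E by simp
      ultimately have "ereal \<delta> \<le> ereal (\<delta> / 2)" by (rule order_trans[rotated])
      then show False using \<open>0 < \<delta>\<close> by simp
    qed
  qed
  ultimately have "prob ?E \<le> real (card ?I) * ?p"
    by (intro prob_le_card_mult_if_AE_covered) auto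
  then show ?thesis by (simp add: card_Plus)
qed

lemma hawkes_modulus_prob_exponentially_small:
  assumes PRM: "poisson_random_measure M Pts" and "0 < T" "0 \<le> \<phi> 0" "0 \<le> \<alpha>"
    and lip: "\<alpha>-lipschitz_on UNIV \<phi>"
    and h_bound: "\<And>x. 0 \<le> x \<Longrightarrow> x \<le> T \<Longrightarrow> \<bar>h x\<bar> \<le> H" and "0 \<le> H"
    and sol: "\<And>\<epsilon>. 0 < \<epsilon> \<Longrightarrow> hawkes_solution M Pts \<phi> h \<epsilon> (N \<epsilon>)"
    and "0 < \<delta>" "0 < r"
  shows "\<forall>\<^sub>F m in at_top. \<exists>Q\<ge>1. \<forall>\<^sub>F \<epsilon> in at_right 0. measure M {\<omega> \<in> space M.
      ereal \<delta> \<le> continuity_modulus T (1 / m) (\<lambda>t. \<epsilon> * real (N \<epsilon> \<omega> t))} \<le> Q * exp (- r / \<epsilon>)"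
proof -
  define \<rho> where "\<rho> = r / min 1 (\<delta> / 2)"
  have "0 \<le> \<rho>" and \<rho>: "\<rho> * min 1 (\<delta> / 2) = r"
    using \<open>0 < r\<close> \<open>0 < \<delta>\<close> unfolding \<rho>_def by auto
  define n where "n = nat \<lceil>exp 1 * (\<phi> 0 + 2 * (\<alpha> * H)) * T * exp \<rho>\<rceil> + 1"
  have "0 < n" unfolding n_def by simp
  have n_large: "exp 1 * (\<phi> 0 + 2 * (\<alpha> * H)) * T \<le> exp (- \<rho>) * real n"
    unfolding n_def by (simp add: exp_minus field_simps) linarith
  define K where "K = \<phi> 0 + \<alpha> * H * (2 ^ n - 1)"
  have "0 \<le> K" unfolding K_def using \<open>0 \<le> \<phi> 0\<close> \<open>0 \<le> \<alpha>\<close> \<open>0 \<le> H\<close> by simp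
  show ?thesis
  proof (rule eventually_at_top_linorderI)
    fix m assume m_ge: "4 * exp 1 * K * exp \<rho> / \<delta> + 1 \<le> m"
    then have "0 < m" using \<open>0 \<le> K\<close> \<open>0 < \<delta>\<close> by (smt (verit) divide_nonneg_pos exp_gt_zero mult_nonneg_nonneg)
    have m_large: "4 * exp 1 * K \<le> exp (- \<rho>) * \<delta> * m"
      using m_ge \<open>0 < \<delta>\<close> by (simp add: exp_minus field_simps)
    have "\<forall>\<^sub>F \<epsilon> in at_right 0. measure M {\<omega> \<in> space M.
        ereal \<delta> \<le> continuity_modulus T (1 / m) (\<lambda>t. \<epsilon> * real (N \<epsilon> \<omega> t))}
        \<le> real (n + nat \<lfloor>m * T\<rfloor> + 1) * exp (- r / \<epsilon>)"
      using eventually_at_right_less[of 0]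
    proof eventually_elim
      case (elim \<epsilon>)
      show ?case
        using hawkes_modulus_prob_le[OF PRM \<open>0 < T\<close> \<open>0 \<le> \<phi> 0\<close> \<open>0 \<le> \<alpha>\<close> lip h_bound \<open>0 \<le> H\<close>
            sol[OF elim] \<open>0 < \<delta>\<close> elim \<open>0 < m\<close> \<open>0 < n\<close> \<open>0 \<le> \<rho>\<close> n_large m_large[unfolded K_def]]
        by (simp add: \<rho> flip: mult.assoc)
    qed
    then show "\<exists>Q\<ge>1. \<forall>\<^sub>F \<epsilon> in at_right 0. measure M {\<omega> \<in> space M.
        ereal \<delta> \<le> continuity_modulus T (1 / m) (\<lambda>t. \<epsilon> * real (N \<epsilon> \<omega> t))} \<le> Q * exp (- r / \<epsilon>)"
      by (intro exI[of _ "real (n + nat \<lfloor>m * T\<rfloor> + 1)"]) auto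
  qed
qed

lemma ereal_mult_elog_le:
  fixes p Q r \<epsilon> :: real
  assumes "1 \<le> Q" "0 < \<epsilon>" "\<epsilon> < r / (2 * ln Q + 1)" and p: "p \<le> Q * exp (- r / \<epsilon>)"
  shows "ereal \<epsilon> * elog p \<le> ereal (- r / 2)"
proof (cases "0 < p")
  case False
  then show ?thesis using \<open>0 < \<epsilon>\<close> by (simp add: elog_def)
next
  case True
  have "0 \<le> ln Q" using \<open>1 \<le> Q\<close> by simp
  have "ln p \<le> ln (Q * exp (- r / \<epsilon>))" using True p by simp
  also have "\<dots> = ln Q - r / \<epsilon>" using \<open>1 \<le> Q\<close> by (simp add: ln_mult)
  finally have "ln p \<le> ln Q - r / \<epsilon>" .
  then have "\<epsilon> * ln p \<le> \<epsilon> * (ln Q - r / \<epsilon>)"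
    using \<open>0 < \<epsilon>\<close> by (intro mult_left_mono) auto
  also have "\<dots> = \<epsilon> * ln Q - r" using \<open>0 < \<epsilon>\<close> by (simp add: right_diff_distrib)
  finally have "\<epsilon> * ln p \<le> \<epsilon> * ln Q - r" .
  moreover have "\<epsilon> * (2 * ln Q + 1) < r"
    using assms \<open>0 \<le> ln Q\<close> by (simp add: pos_less_divide_eq add_nonneg_pos mult.commute)
  ultimately have "\<epsilon> * ln p \<le> - r / 2" using \<open>0 < \<epsilon>\<close> by (simp add: algebra_simps)
  then show ?thesis using True by (simp add: elog_def)
qed

lemma Limsup_Limsup_mult_elog_eq_MInf:
  fixes P :: "real \<Rightarrow> real \<Rightarrow> real"
  assumes "\<And>r. 0 < r \<Longrightarrow> \<forall>\<^sub>F m in at_top. \<exists>Q\<ge>1. \<forall>\<^sub>F \<epsilon> in at_right 0. P m \<epsilon> \<le> Q * exp (- r / \<epsilon>)"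
  shows "Limsup at_top (\<lambda>m. Limsup (at_right 0) (\<lambda>\<epsilon>. ereal \<epsilon> * elog (P m \<epsilon>))) = -\<infinity>"
proof (rule ereal_bot)
  fix B :: real
  define r where "r = 2 * (\<bar>B\<bar> + 1)"
  have "0 < r" unfolding r_def by simp
  have "\<forall>\<^sub>F m in at_top. Limsup (at_right 0) (\<lambda>\<epsilon>. ereal \<epsilon> * elog (P m \<epsilon>)) \<le> ereal (- r / 2)"
    using assms[OF \<open>0 < r\<close>]
  proof eventually_elim
    case (elim m)
    then obtain Q where "1 \<le> Q" and bound: "\<forall>\<^sub>F \<epsilon> in at_right 0. P m \<epsilon> \<le> Q * exp (- r / \<epsilon>)"
      by blast
    have "0 < r / (2 * ln Q + 1)" using \<open>0 < r\<close> \<open>1 \<le> Q\<close> by (simp add: add_nonneg_pos)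
    then have "\<forall>\<^sub>F \<epsilon> in at_right 0. 0 < \<epsilon> \<and> \<epsilon> < r / (2 * ln Q + 1)"
      unfolding eventually_at_right_field by auto
    with bound have "\<forall>\<^sub>F \<epsilon> in at_right 0. ereal \<epsilon> * elog (P m \<epsilon>) \<le> ereal (- r / 2)"
    proof eventually_elim
      case (elim \<epsilon>)
      then show ?case by (intro ereal_mult_elog_le[OF \<open>1 \<le> Q\<close>]) auto
    qed
    then show ?case by (rule Limsup_bounded)
  qed
  then have "Limsup at_top (\<lambda>m. Limsup (at_right 0) (\<lambda>\<epsilon>. ereal \<epsilon> * elog (P m \<epsilon>)))
      \<le> ereal (- r / 2)"
    by (rule Limsup_bounded)
  also have "\<dots> \<le> ereal B" unfolding r_def by simp
  finally show "Limsup at_top (\<lambda>m. Limsup (at_right 0) (\<lambda>\<epsilon>. ereal \<epsilon> * elog (P m \<epsilon>))) \<le> ereal B" .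
qed

theorem lemma2p8:
  fixes M :: "'w measure" and Pts :: "'w \<Rightarrow> (real \<times> real) set"
    and \<phi> h :: "real \<Rightarrow> real" and T \<alpha> \<delta> :: real
    and N :: "real \<Rightarrow> 'w \<Rightarrow> real \<Rightarrow> nat"
  assumes PRM: "poisson_random_measure M Pts"
    and T_pos: "0 < T"
    and phi_nonneg: "\<And>x. 0 \<le> \<phi> x"
    and alpha_pos: "0 < \<alpha>"
    and phi_lip: "\<alpha>-lipschitz_on UNIV \<phi>"
    and h_locint: "\<And>K. 0 \<le> K \<Longrightarrow> set_integrable lborel {0..K} h"
    and h_locbdd: "\<And>K. 0 \<le> K \<Longrightarrow> bounded (h ` {0..K})"
    and h_small: "\<alpha> * (LINT t:{0..T}|lborel. \<bar>h t\<bar>) < 1"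
    and sol: "\<And>\<epsilon>. 0 < \<epsilon> \<Longrightarrow> hawkes_solution M Pts \<phi> h \<epsilon> (N \<epsilon>)"
    and delta_pos: "0 < \<delta>"
  shows "Limsup at_top (\<lambda>m::real. Limsup (at_right (0::real)) (\<lambda>\<epsilon>.
            ereal \<epsilon> * elog (measure M {\<omega> \<in> space M.
              (SUP (s, t) \<in> {(s, t). 0 \<le> s \<and> s \<le> t \<and> t \<le> T \<and> \<bar>t - s\<bar> \<le> 1 / m}.
                 ereal \<bar>\<epsilon> * real (N \<epsilon> \<omega> t) - \<epsilon> * real (N \<epsilon> \<omega> s)\<bar>) \<ge> ereal \<delta>})))
         = -\<infinity>"
proof -
  obtain H where "0 \<le> H" and h_bound: "\<And>x. 0 \<le> x \<Longrightarrow> x \<le> T \<Longrightarrow> \<bar>h x\<bar> \<le> H"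
  proof -
    obtain H0 where "\<forall>x\<in>h ` {0..T}. \<bar>x\<bar> \<le> H0"
      using h_locbdd[of T] T_pos unfolding bounded_real by auto
    then show thesis by (intro that[of "max H0 0"]) force+
  qed
  note small = hawkes_modulus_prob_exponentially_small[OF PRM T_pos phi_nonneg less_imp_le[OF alpha_pos]
      phi_lip h_bound \<open>0 \<le> H\<close> sol delta_pos]
  show ?thesis
    by (rule Limsup_Limsup_mult_elog_eq_MInf) (use small in \<open>simp add: continuity_modulus_def\<close>)
qed

end
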